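(* Let $\mathcal{I}$ be the input model and let $\mathbf{P}$ (protocol) and $\mathbf{T}$ (task) be action models with proper partial epistemic frames. If there exists a guarded positive epistemic formula $\varphi$ such that $\mathcal{I}[\![\mathbf{T}]\!]\models\varphi$ but $\mathcal{I}[\![\mathbf{P}]\!]\not\models\varphi$, then the task $\mathbf{T}$ is not solvable by the protocol $\mathbf{P}$.
   Context: Agents $\mathsf{Ag}=\{0,\dots,n-1\}$, $n>1$; $\mathsf{Value}=\mathsf{Ag}$; atomic propositions $\mathsf{At}=\bigcup_a\mathsf{At}_a$ with $\mathsf{At}_a=\{\mathrm{input}_a^v\mid v\in\mathsf{Value}\}$; $\mathsf{At}_B=\bigcup_{a\in B}\mathsf{At}_a$. Epistemic formulas: $\varphi::=p\mid\neg\varphi\mid\varphi\wedge\varphi\mid\varphi\vee\varphi\mid K_a\varphi$. Let $\mathsf{false}=p\wedge\neg p$, $\mathrm{alive}(a)=\neg K_a\mathsf{false}$, $\mathrm{alive}(B)=\bigwedge_{a\in B}\mathrm{alive}(a)$. Guarded positive formulas: $\varphi::=(\mathrm{alive}(B)\Rightarrow\psi)\mid\varphi\wedge\varphi\mid\varphi\vee\varphi\mid K_a\varphi$ ($B\subseteq\mathsf{Ag}$), where $\psi$ is a propositional formula (built with $\neg,\wedge,\vee$) over atoms in $\mathsf{At}_B$. A partial epistemic model $\langle W,\sim,L\rangle$: $W$ nonempty finite, each $\sim_a$ a partial equivalence relation (symmetric, transitive), $L:W\to\mathcal{P}(\mathsf{At})$; $\mathrm{Alive}(w)=\{a\mid w\sim_a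 w\}$; $w\sim_A w'$ means $w\sim_a w'$ for all $a\in A$; proper means $w\ne w'$ implies $w\not\sim_a w'$ for some $a$. Satisfaction: $p$ true at $w$ iff $p\in L(w)$; Booleans as usual; $K_a\varphi$ true at $w$ iff $\varphi$ true at all $w'$ with $w\sim_aw'$; $\mathcal{M}\models\varphi$ means true at every world. Input model $\mathcal{I}$: worlds are the sets $X=\{(0,v_0),\dots,(n-1,v_{n-1})\}$ with $v_i\in\mathsf{Value}$; $X\sim_aY$ iff $X$ and $Y$ contain the same vertex of the form $(a,v)$; $L(X)=\{\mathrm{input}_a^v\mid (a,v)\in X\}$. An action model $\langle T,\sim,\mathsf{pre}\rangle$: a partial epistemic frame $\langle T,\sim\rangle$ plus $\mathsf{pre}$ mapping actions to formulas; $\mathrm{Alive}(t)=\{a\mid t\sim_at\}$. Partial product update $\mathcal{I}[\![\mathbf{A}]\!]$: with $\langle X\rangle_t=\{Y\mid X\sim^{\mathcal{I}}_{\mathrm{Alive}(t)}Y,\ \mathcal{I},Y\models\mathsf{pre}(t)\}$, worlds are $(\langle X\rangle_t,t)$ with $\mathrm{Alive}(t)\subseteq\mathrm{Alive}(X)$ and $\mathcal{I},X\models\mathsf{pre}(t)$; $(\langle X\rangle_t,t)\sim_a(\langle Y\rangle_s,s)$ iff $X\sim^{\mathcal{I}}_aY$ and $t\sim_as$; label $\bigcap_{X'\in\langle X\rangle_t}L(X')$. A morphism $f:\langle W,\sim,L\rangle\to\langle W',\sim',L'\rangle$ is a map $f:W\to\mathcal{P}(W')$ such that (i) $w\sim_a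 w'$ implies $u\sim'_au'$ for all $u\in f(w)$, $u'\in f(w')$; (ii) for each $w$ there is $w'\in f(w)$ with $f(w)=\{u\in W'\mid w'\sim'_{\mathrm{Alive}(w)}u\}$; (iii) for $w\in W$, $w'\in f(w)$: $L(w)\cap\mathsf{At}_{\mathrm{Alive}(w)}=L'(w')\cap\mathsf{At}_{\mathrm{Alive}(w)}$. The task $\mathbf{T}$ is solvable by $\mathbf{P}$ if there is a morphism $\delta:\mathcal{I}[\![\mathbf{P}]\!]\to\mathcal{I}[\![\mathbf{T}]\!]$ such that for every world $(E,p)$ of $\mathcal{I}[\![\mathbf{P}]\!]$ there is $(E',t)\in\delta((E,p))$ with $E\subseteq E'$. *)

theory Defs
  imports Main
begin

text \<open>Agents and values are natural numbers below n. The atom input_a^v is Atom (a,v).\<close>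

datatype fm = Atom "nat \<times> nat" | Neg fm | Conj fm fm | Disj fm fm | K nat fm

record 'w pem =
  worlds :: "'w set"
  rel :: "nat \<Rightarrow> 'w \<Rightarrow> 'w \<Rightarrow> bool"
  lab :: "'w \<Rightarrow> (nat \<times> nat) set"

fun sat :: "'w pem \<Rightarrow> 'w \<Rightarrow> fm \<Rightarrow> bool" where
  "sat M w (Atom p) = (p \<in> lab M w)"
| "sat M w (Neg f) = (\<not> sat M w f)"
| "sat M w (Conj f g) = (sat M w f \<and> sat M w g)"
| "sat M w (Disj f g) = (sat M w f \<or> sat M w g)"
| "sat M w (K a f) = (\<forall>w'\<in>worlds M. rel M a w w' \<longrightarrow> sat M w' f)"

definition models :: "'w pem \<Rightarrow> fm \<Rightarrow> bool" where
  "models M f = (\<forall>w\<in>worlds M. sat M w f)"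

definition falsefm :: fm where "falsefm = Conj (Atom (0,0)) (Neg (Atom (0,0)))"

definition alivefm :: "nat \<Rightarrow> fm" where "alivefm a = Neg (K a falsefm)"

fun alive_list :: "nat list \<Rightarrow> fm" where
  "alive_list [] = Neg falsefm"
| "alive_list (a # as) = Conj (alivefm a) (alive_list as)"

definition impl :: "fm \<Rightarrow> fm \<Rightarrow> fm" where "impl f g = Disj (Neg f) g"

inductive prop_over :: "nat \<Rightarrow> nat set \<Rightarrow> fm \<Rightarrow> bool" for n B where
  "a \<in> B \<Longrightarrow> v < n \<Longrightarrow> prop_over n B (Atom (a, v))"
| "prop_over n B f \<Longrightarrow> prop_over n B (Neg f)"
| "prop_over n B f \<Longrightarrow> prop_over n B g \<Longrightarrow> prop_over n B (Conj f g)"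
| "prop_over n B f \<Longrightarrow> prop_over n B g \<Longrightarrow> prop_over n B (Disj f g)"

text \<open>Guarded positive formulas; alive(B) is the conjunction over a list enumerating B.\<close>
inductive gpos :: "nat \<Rightarrow> fm \<Rightarrow> bool" for n where
  "set Bs \<subseteq> {..<n} \<Longrightarrow> prop_over n (set Bs) psi \<Longrightarrow> gpos n (impl (alive_list Bs) psi)"
| "gpos n f \<Longrightarrow> gpos n g \<Longrightarrow> gpos n (Conj f g)"
| "gpos n f \<Longrightarrow> gpos n g \<Longrightarrow> gpos n (Disj f g)"
| "a < n \<Longrightarrow> gpos n f \<Longrightarrow> gpos n (K a f)"

definition alive_set :: "nat \<Rightarrow> 'w pem \<Rightarrow> 'w \<Rightarrow> nat set" where
  "alive_set n M w = {a. a < n \<and> rel M a w w}"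

definition input_model :: "nat \<Rightarrow> (nat \<times> nat) set pem" where
  "input_model n = \<lparr> worlds = {X. \<exists>v. (\<forall>i<n. v i < n) \<and> X = {(i, v i) | i. i < n}},
     rel = (\<lambda>a X Y. \<exists>v. (a, v) \<in> X \<and> (a, v) \<in> Y),
     lab = (\<lambda>X. X) \<rparr>"

record 't action_model =
  acts :: "'t set"
  arel :: "nat \<Rightarrow> 't \<Rightarrow> 't \<Rightarrow> bool"
  pre :: "'t \<Rightarrow> fm"

definition is_action_model :: "nat \<Rightarrow> 't action_model \<Rightarrow> bool" where
  "is_action_model n A = (acts A \<noteq> {} \<and> finite (acts A) \<and>
     (\<forall>a<n. \<forall>t\<in>acts A. \<forall>s\<in>acts A. arel A a t s \<longrightarrow> arel A a s t) \<and>
     (\<forall>a<n. \<forall>t\<in>acts A. \<forall>s\<in>acts A. \<forall>u\<in>acts A. arel A a t s \<longrightarrow> arel A a s u \<longrightarrow> arel A a t u))"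

definition proper_act :: "nat \<Rightarrow> 't action_model \<Rightarrow> bool" where
  "proper_act n A = (\<forall>t\<in>acts A. \<forall>s\<in>acts A. t \<noteq> s \<longrightarrow> (\<exists>a<n. \<not> arel A a t s))"

definition alive_act :: "nat \<Rightarrow> 't action_model \<Rightarrow> 't \<Rightarrow> nat set" where
  "alive_act n A t = {a. a < n \<and> arel A a t t}"

definition cls :: "nat \<Rightarrow> 't action_model \<Rightarrow> (nat \<times> nat) set \<Rightarrow> 't \<Rightarrow> (nat \<times> nat) set set" where
  "cls n A X t = {Y \<in> worlds (input_model n).
      (\<forall>a\<in>alive_act n A t. rel (input_model n) a X Y) \<and> sat (input_model n) Y (pre A t)}"

definition good_rep :: "nat \<Rightarrow> 't action_model \<Rightarrow> (nat \<times> nat) set \<Rightarrow> 't \<Rightarrow> bool" where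
  "good_rep n A X t = (X \<in> worlds (input_model n) \<and> t \<in> acts A \<and>
      alive_act n A t \<subseteq> alive_set n (input_model n) X \<and> sat (input_model n) X (pre A t))"

definition update :: "nat \<Rightarrow> 't action_model \<Rightarrow> ((nat \<times> nat) set set \<times> 't) pem" where
  "update n A = \<lparr> worlds = {(cls n A X t, t) | X t. good_rep n A X t},
     rel = (\<lambda>a (E, t) (E', s). \<exists>X Y. good_rep n A X t \<and> good_rep n A Y s \<and>
              E = cls n A X t \<and> E' = cls n A Y s \<and>
              rel (input_model n) a X Y \<and> arel A a t s),
     lab = (\<lambda>(E, t). \<Inter>X'\<in>E. lab (input_model n) X') \<rparr>"

definition At_of :: "nat \<Rightarrow> nat set \<Rightarrow> (nat \<times> nat) set" where
  "At_of n B = {(a, v). a \<in> B \<and> v < n}"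

definition morphism :: "nat \<Rightarrow> 'w pem \<Rightarrow> 'v pem \<Rightarrow> ('w \<Rightarrow> 'v set) \<Rightarrow> bool" where
  "morphism n M M' f = (
     (\<forall>w\<in>worlds M. f w \<subseteq> worlds M') \<and>
     (\<forall>a<n. \<forall>w\<in>worlds M. \<forall>w'\<in>worlds M. rel M a w w' \<longrightarrow>
         (\<forall>u\<in>f w. \<forall>u'\<in>f w'. rel M' a u u')) \<and>
     (\<forall>w\<in>worlds M. \<exists>w'\<in>f w.
         f w = {u \<in> worlds M'. \<forall>a\<in>alive_set n M w. rel M' a w' u}) \<and>
     (\<forall>w\<in>worlds M. \<forall>w'\<in>f w.
         lab M w \<inter> At_of n (alive_set n M w) = lab M' w' \<inter> At_of n (alive_set n M w)))"

definition solvable :: "nat \<Rightarrow> 'p action_model \<Rightarrow> 't action_model \<Rightarrow> bool" where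
  "solvable n P T = (\<exists>\<delta>. morphism n (update n P) (update n T) \<delta> \<and>
     (\<forall>(E, p)\<in>worlds (update n P). \<exists>(E', t)\<in>\<delta> (E, p). E \<subseteq> E'))"

end

theory Submission
  imports Defs
begin

text \<open>
  A morphism of partial epistemic models reflects guarded positive formulas. For a guard
  alive(B) \<Rightarrow> \<psi>: if the agents of B are alive at w (as the relations are partial equivalences,
  this means w is related to itself) they are alive at every image u of w, because morphisms
  preserve the relations; so \<psi> holds at u, and since w and u carry the same
  atoms of alive agents, \<psi> holds at w. For K a: every a-successor of w has an image, which is an
  a-successor of u. Hence a morphism I[P] \<rightarrow> I[T] would transport the validity of \<phi> from
  I[T] back to I[P].
\<close>

lemma sat_falsefm: "\<not> sat M w falsefm"
  by (simp add: falsefm_def)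

lemma sat_alive_list: "sat M w (alive_list Bs) \<longleftrightarrow> (\<forall>a\<in>set Bs. \<exists>w'\<in>worlds M. rel M a w w')"
  by (induction Bs) (auto simp: alivefm_def sat_falsefm)

lemma sat_impl: "sat M w (impl f g) \<longleftrightarrow> (sat M w f \<longrightarrow> sat M w g)"
  by (auto simp: impl_def)

lemma At_of_mono: "B \<subseteq> C \<Longrightarrow> At_of n B \<subseteq> At_of n C"
  by (auto simp: At_of_def)

lemma prop_over_sat_cong:
  assumes "prop_over n B \<psi>"
    and "lab M w \<inter> At_of n B = lab M' u \<inter> At_of n B"
  shows "sat M w \<psi> \<longleftrightarrow> sat M' u \<psi>"
  using assms
proof (induction rule: prop_over.induct)
  case (1 a v)
  then have "(a, v) \<in> At_of n B" by (simp add: At_of_def)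
  with 1 show ?case by auto
qed auto

definition left_quasi_reflexive :: "nat \<Rightarrow> 'w pem \<Rightarrow> bool" where
  "left_quasi_reflexive n M =
     (\<forall>a<n. \<forall>w\<in>worlds M. \<forall>w'\<in>worlds M. rel M a w w' \<longrightarrow> rel M a w w)"

lemma left_quasi_reflexiveD:
  "left_quasi_reflexive n M \<Longrightarrow> a < n \<Longrightarrow> w \<in> worlds M \<Longrightarrow> w' \<in> worlds M \<Longrightarrow> rel M a w w'
    \<Longrightarrow> rel M a w w"
  by (auto simp: left_quasi_reflexive_def)

lemma update_left_quasi_reflexive:
  assumes "is_action_model n A"
  shows "left_quasi_reflexive n (update n A)"
  unfolding left_quasi_reflexive_def
proof (intro allI impI ballI)
  fix a w w' assume a: "a < n" and "rel (update n A) a w w'"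
  then obtain E t E' s X Y where w: "w = (E, t)" and X: "good_rep n A X t" "E = cls n A X t"
      and Y: "good_rep n A Y s" and XY: "rel (input_model n) a X Y" and ts: "arel A a t s"
    by (cases w, cases w') (auto simp: update_def)
  have "t \<in> acts A" "s \<in> acts A"
    using X Y by (simp_all add: good_rep_def)
  with assms a ts have "arel A a t t"
    unfolding is_action_model_def by blast
  moreover have "rel (input_model n) a X X"
    using XY by (auto simp: input_model_def)
  ultimately show "rel (update n A) a w w"
    using X unfolding w update_def by auto
qed

lemma morphism_image_subset:
  "morphism n M M' f \<Longrightarrow> w \<in> worlds M \<Longrightarrow> f w \<subseteq> worlds M'"
  by (simp add: morphism_def)

lemma morphism_image_nonempty:
  "morphism n M M' f \<Longrightarrow> w \<in> worlds M \<Longrightarrow> \<exists>u. u \<in> f w"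
  unfolding morphism_def by blast

lemma morphism_rel:
  "morphism n M M' f \<Longrightarrow> a < n \<Longrightarrow> w \<in> worlds M \<Longrightarrow> w' \<in> worlds M \<Longrightarrow> rel M a w w'
    \<Longrightarrow> u \<in> f w \<Longrightarrow> u' \<in> f w' \<Longrightarrow> rel M' a u u'"
  unfolding morphism_def by blast

lemma morphism_lab:
  "morphism n M M' f \<Longrightarrow> w \<in> worlds M \<Longrightarrow> u \<in> f w
    \<Longrightarrow> lab M w \<inter> At_of n (alive_set n M w) = lab M' u \<inter> At_of n (alive_set n M w)"
  unfolding morphism_def by blast

lemma morphism_reflects_gpos:
  assumes f: "morphism n M M' f" and M: "left_quasi_reflexive n M"
  shows "gpos n \<phi> \<Longrightarrow> w \<in> worlds M \<Longrightarrow> u \<in> f w \<Longrightarrow> sat M' u \<phi> \<Longrightarrow> sat M w \<phi>"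
proof (induction arbitrary: w u rule: gpos.induct)
  case (1 Bs \<psi>)
  show ?case
    unfolding sat_impl
  proof
    assume guard: "sat M w (alive_list Bs)"
    have alive: "rel M a w w" if a: "a \<in> set Bs" for a
    proof -
      obtain w' where "w' \<in> worlds M" "rel M a w w'"
        using guard a by (auto simp: sat_alive_list)
      moreover have "a < n"
        using 1(1) a by auto
      ultimately show ?thesis
        using left_quasi_reflexiveD[OF M _ 1(3)] by blast
    qed
    have "u \<in> worlds M'"
      using morphism_image_subset[OF f 1(3)] 1(4) by blast
    moreover have "rel M' a u u" if a: "a \<in> set Bs" for a
    proof -
      have "a < n"
        using 1(1) a by auto
      then show ?thesis
        using morphism_rel[OF f _ 1(3) 1(3) alive[OF a] 1(4) 1(4)] by blast
    qed
    ultimately have "sat M' u (alive_list Bs)"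
      unfolding sat_alive_list by blast
    with 1(5) have "sat M' u \<psi>"
      by (simp add: sat_impl)
    have "set Bs \<subseteq> alive_set n M w"
      using alive 1(1) by (auto simp: alive_set_def)
    then have "lab M w \<inter> At_of n (set Bs) = lab M' u \<inter> At_of n (set Bs)"
      using morphism_lab[OF f 1(3,4)] At_of_mono by blast
    then have "sat M w \<psi> \<longleftrightarrow> sat M' u \<psi>"
      by (rule prop_over_sat_cong[OF 1(2)])
    with \<open>sat M' u \<psi>\<close> show "sat M w \<psi>"
      by blast
  qed
next
  case (4 a g)
  show ?case
  proof (simp, intro ballI impI)
    fix w' assume w': "w' \<in> worlds M" and "rel M a w w'"
    obtain u' where u': "u' \<in> f w'"
      using morphism_image_nonempty[OF f w'] by blast
    have "rel M' a u u'"
      using morphism_rel[OF f 4(1) 4(4) w' \<open>rel M a w w'\<close> 4(5) u'] .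
    moreover have "u' \<in> worlds M'"
      using morphism_image_subset[OF f w'] u' by blast
    ultimately have "sat M' u' g"
      using 4(6) by simp
    then show "sat M w' g"
      using 4(3)[OF w' u'] by simp
  qed
qed auto

lemma morphism_reflects_gpos_validity:
  assumes "morphism n M M' f" "left_quasi_reflexive n M" "gpos n \<phi>" "models M' \<phi>"
  shows "models M \<phi>"
  unfolding models_def
proof
  fix w assume w: "w \<in> worlds M"
  then obtain u where u: "u \<in> f w"
    using morphism_image_nonempty[OF assms(1)] by blast
  with w have "u \<in> worlds M'"
    using morphism_image_subset[OF assms(1)] by blast
  with assms(4) have "sat M' u \<phi>"
    by (simp add: models_def)
  with assms(1-3) w u show "sat M w \<phi>"
    by (rule morphism_reflects_gpos)
qed

theorem theorem3p6:
  fixes n :: nat and P :: "'p action_model" and T :: "'t action_model" and \<phi> :: fm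
  assumes "n > 1"
    and "is_action_model n P" and "proper_act n P"
    and "is_action_model n T" and "proper_act n T"
    and "gpos n \<phi>"
    and "models (update n T) \<phi>"
    and "\<not> models (update n P) \<phi>"
  shows "\<not> solvable n P T"
proof
  assume "solvable n P T"
  then obtain \<delta> where "morphism n (update n P) (update n T) \<delta>"
    by (auto simp: solvable_def)
  then have "models (update n P) \<phi>"
    using update_left_quasi_reflexive[OF assms(2)] assms(6,7)
    by (rule morphism_reflects_gpos_validity)
  with assms(8) show False ..
qed

end
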